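(* Assume the system is IFS$_m$, with a controller $\Psi$ of kind (2) whose closed loop satisfies $\|\phi(k,\sigma,x_0,\Psi)\|\le C\gamma^k\|x_0\|$ for all $x_0,\sigma,k$, where $C>1$, $\gamma\in[0,1)$. Define $V:\mathbb{R}^n\to\mathbb{R}$ by $$V(x_0)=\inf_{\Psi'\in\mathcal{C}_m}\ \sup_{\sigma\in\Sigma^\omega}\ \sum_{k=0}^{\infty}\|\phi(k,\sigma,x_0,\Psi')\|,$$ where $\mathcal{C}_m$ is the set of all functions $\mathcal{H}_-\to\mathbb{R}^m$. Then $\|x_0\|\le V(x_0)\le \frac{C}{1-\gamma}\|x_0\|$ for all $x_0\in\mathbb{R}^n$, and $V$ is a norm on $\mathbb{R}^n$ (positive definite, absolutely homogeneous of degree 1, i.e. $V(\lambda x)=|\lambda|V(x)$ for all $\lambda\in\mathbb{R}$, and subadditive); in particular $V$ is convex and continuous.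
   Context: Let $\Sigma$ be a finite nonempty set and $\{(A_i,B_i)\in\mathbb{R}^{n\times n}\times\mathbb{R}^{n\times m} : i\in\Sigma\}$. Consider $x(k+1)=A_{\sigma(k)}x(k)+B_{\sigma(k)}u(k)$, $k\in\mathbb{N}=\{0,1,\dots\}$, with arbitrary switching signal $\sigma:\mathbb{N}\to\Sigma$ (set of all such: $\Sigma^\omega$). $\|\cdot\|$ is the Euclidean norm. $\mathcal{H}_-$ is the set of all tuples $(x_k,\dots,x_0;\,i_{k-1},\dots,i_0)$ with $k\in\mathbb{N}$, $x_j\in\mathbb{R}^n$, $i_j\in\Sigma$ (mode string empty when $k=0$). For a function $\Psi:\mathcal{H}_-\to\mathbb{R}^m$ (a current-mode-independent controller with memory), $\phi(k,\sigma,x_0,\Psi)$ denotes the closed-loop trajectory defined by $x(0)=x_0$ and $x(k+1)=A_{\sigma(k)}x(k)+B_{\sigma(k)}\Psi(x(k),\dots,x(0);\,\sigma(k-1),\dots,\sigma(0))$. The system is IFS$_m$ if there exists such $\Psi$ and constants $M>0,\gamma\in[0,1)$ with $\|\phi(k,\sigma,x_0,\Psi)\|\le M\gamma^k\|x_0\|$ for all $x_0\in\mathbb{R}^n,\sigma\in\Sigma^\omega,k\in\mathbb{N}$. *)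

theory Defs
  imports "HOL-Analysis.Analysis"
begin

text \<open>A history (x_k,...,x_0; i_{k-1},...,i_0) is represented by the pair of lists
  [x_k,...,x_0] and [i_{k-1},...,i_0].\<close>

type_synonym ('n,'m,'s) controller = "(real^'n) list \<Rightarrow> 's list \<Rightarrow> real^'m"

fun hist :: "('s \<Rightarrow> real^'n^'n) \<Rightarrow> ('s \<Rightarrow> real^'m^'n) \<Rightarrow> ('n,'m,'s) controller
             \<Rightarrow> (nat \<Rightarrow> 's) \<Rightarrow> real^'n \<Rightarrow> nat \<Rightarrow> (real^'n) list" where
  "hist A B \<Psi> \<sigma> x0 0 = [x0]"
| "hist A B \<Psi> \<sigma> x0 (Suc k) =
     (let h = hist A B \<Psi> \<sigma> x0 k
      in (A (\<sigma> k) *v hd h + B (\<sigma> k) *v \<Psi> h (rev (map \<sigma> [0..<k]))) # h)"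

definition phi :: "('s \<Rightarrow> real^'n^'n) \<Rightarrow> ('s \<Rightarrow> real^'m^'n) \<Rightarrow> nat \<Rightarrow> (nat \<Rightarrow> 's)
                   \<Rightarrow> real^'n \<Rightarrow> ('n,'m,'s) controller \<Rightarrow> real^'n" where
  "phi A B k \<sigma> x0 \<Psi> = hd (hist A B \<Psi> \<sigma> x0 k)"

definition Vext :: "('s \<Rightarrow> real^'n^'n) \<Rightarrow> ('s \<Rightarrow> real^'m^'n) \<Rightarrow> real^'n \<Rightarrow> ennreal" where
  "Vext A B x0 = (INF \<Psi>::('n,'m,'s) controller. SUP \<sigma>::nat \<Rightarrow> 's.
                    (\<Sum>k. ennreal (norm (phi A B k \<sigma> x0 \<Psi>))))"

text \<open>Real-valued V (the theorem shows Vext is finite, so nothing is lost).\<close>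
definition V :: "('s \<Rightarrow> real^'n^'n) \<Rightarrow> ('s \<Rightarrow> real^'m^'n) \<Rightarrow> real^'n \<Rightarrow> real" where
  "V A B x0 = enn2real (Vext A B x0)"

end

theory Submission
  imports Defs
begin

text \<open>Since the plant
  is linear in (state, input), a controller may run two given controllers on virtual
  copies of the plant, driven by the observed modes, and apply the corresponding linear
  combination of their inputs; its trajectory is that combination of the two
  trajectories. Applied to near-optimal controllers for x and y this gives
  V (a x + b y) \<le> |a| V x + |b| V y, hence homogeneity, subadditivity and convexity.
  The lower bound is the k = 0 term of the cost, the upper bound the geometric series
  of the exponential estimate, and V is Lipschitz because it is subadditive and bounded
  by a multiple of the norm.\<close>

lemma hist_cong:
  "(\<And>i. i < k \<Longrightarrow> \<sigma> i = \<sigma>' i) \<Longrightarrow> hist A B \<Psi> \<sigma> x k = hist A B \<Psi> \<sigma>' x k"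
proof (induction k)
  case 0
  then show ?case by simp
next
  case (Suc k)
  then have "hist A B \<Psi> \<sigma> x k = hist A B \<Psi> \<sigma>' x k" and "\<sigma> k = \<sigma>' k"
    and "map \<sigma> [0..<k] = map \<sigma>' [0..<k]"
    by simp_all
  then show ?case by (simp add: Let_def del: map_eq_conv)
qed

lemma phi_0 [simp]: "phi A B 0 \<sigma> x \<Psi> = x"
  by (simp add: phi_def)

lemma phi_Suc: "phi A B (Suc k) \<sigma> x \<Psi> = A (\<sigma> k) *v phi A B k \<sigma> x \<Psi>
   + B (\<sigma> k) *v \<Psi> (hist A B \<Psi> \<sigma> x k) (rev (map \<sigma> [0..<k]))"
  by (simp add: phi_def Let_def)

text \<open>The state history is ignored: the modes seen so far are read off the mode string
  (its reversal lists them in chronological order), which is all that is needed to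
  replay the closed loops of the two controllers from x and from y.\<close>

definition superpose_ctrl :: "('s \<Rightarrow> real^'n^'n) \<Rightarrow> ('s \<Rightarrow> real^'m^'n)
    \<Rightarrow> ('n,'m,'s) controller \<Rightarrow> ('n,'m,'s) controller \<Rightarrow> real^'n \<Rightarrow> real^'n
    \<Rightarrow> real \<Rightarrow> real \<Rightarrow> ('n,'m,'s) controller" where
  "superpose_ctrl A B \<Psi>1 \<Psi>2 x y a b = (\<lambda>_ ms. let \<sigma> = (!) (rev ms) in
     a *\<^sub>R \<Psi>1 (hist A B \<Psi>1 \<sigma> x (length ms)) ms + b *\<^sub>R \<Psi>2 (hist A B \<Psi>2 \<sigma> y (length ms)) ms)"

lemma phi_superpose_ctrl:
  "phi A B k \<sigma> (a *\<^sub>R x + b *\<^sub>R y) (superpose_ctrl A B \<Psi>1 \<Psi>2 x y a b)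
     = a *\<^sub>R phi A B k \<sigma> x \<Psi>1 + b *\<^sub>R phi A B k \<sigma> y \<Psi>2"
proof (induction k)
  case 0
  then show ?case by simp
next
  case (Suc k)
  let ?ms = "rev (map \<sigma> [0..<k])"
  have "hist A B \<Psi> ((!) (rev ?ms)) z k = hist A B \<Psi> \<sigma> z k" for \<Psi> z
    by (rule hist_cong) simp
  then have "superpose_ctrl A B \<Psi>1 \<Psi>2 x y a b h ?ms =
      a *\<^sub>R \<Psi>1 (hist A B \<Psi>1 \<sigma> x k) ?ms + b *\<^sub>R \<Psi>2 (hist A B \<Psi>2 \<sigma> y k) ?ms" for h
    by (simp add: superpose_ctrl_def)
  then show ?case
    unfolding phi_Suc Suc
    by (simp only: matrix_vector_right_distrib matrix_vector_mult_scaleR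
        scaleR_right_distrib add_ac)
qed

definition cost :: "('s \<Rightarrow> real^'n^'n) \<Rightarrow> ('s \<Rightarrow> real^'m^'n) \<Rightarrow> ('n,'m,'s) controller
    \<Rightarrow> real^'n \<Rightarrow> ennreal" where
  "cost A B \<Psi> x = (SUP \<sigma>. \<Sum>k. ennreal (norm (phi A B k \<sigma> x \<Psi>)))"

lemma Vext_eq_INF_cost: "Vext A B x = (INF \<Psi>. cost A B \<Psi> x)"
  unfolding Vext_def cost_def ..

lemma suminf_norm_lincomb_le:
  fixes u v :: "nat \<Rightarrow> 'a::real_normed_vector"
  shows "(\<Sum>k. ennreal (norm (a *\<^sub>R u k + b *\<^sub>R v k)))
     \<le> ennreal \<bar>a\<bar> * (\<Sum>k. ennreal (norm (u k))) + ennreal \<bar>b\<bar> * (\<Sum>k. ennreal (norm (v k)))"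
proof -
  have "ennreal (norm (a *\<^sub>R u k + b *\<^sub>R v k))
      \<le> ennreal \<bar>a\<bar> * ennreal (norm (u k)) + ennreal \<bar>b\<bar> * ennreal (norm (v k))" for k
  proof -
    have "norm (a *\<^sub>R u k + b *\<^sub>R v k) \<le> \<bar>a\<bar> * norm (u k) + \<bar>b\<bar> * norm (v k)"
      using norm_triangle_ineq[of "a *\<^sub>R u k" "b *\<^sub>R v k"] by simp
    then have "ennreal (norm (a *\<^sub>R u k + b *\<^sub>R v k)) \<le> ennreal (\<bar>a\<bar> * norm (u k) + \<bar>b\<bar> * norm (v k))"
      by (rule ennreal_leI)
    then show ?thesis
      by (simp add: ennreal_plus ennreal_mult del: ennreal_plus_if)
  qed
  then have "(\<Sum>k. ennreal (norm (a *\<^sub>R u k + b *\<^sub>R v k)))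
      \<le> (\<Sum>k. ennreal \<bar>a\<bar> * ennreal (norm (u k)) + ennreal \<bar>b\<bar> * ennreal (norm (v k)))"
    by (intro suminf_le summableI)
  also have "\<dots> = ennreal \<bar>a\<bar> * (\<Sum>k. ennreal (norm (u k)))
      + ennreal \<bar>b\<bar> * (\<Sum>k. ennreal (norm (v k)))"
    by (simp add: suminf_add[OF summableI summableI, symmetric] ennreal_suminf_cmult)
  finally show ?thesis .
qed

lemma Vext_lincomb_le_cost:
  "Vext A B (a *\<^sub>R x + b *\<^sub>R y) \<le> ennreal \<bar>a\<bar> * cost A B \<Psi>1 x + ennreal \<bar>b\<bar> * cost A B \<Psi>2 y"
proof -
  have "Vext A B (a *\<^sub>R x + b *\<^sub>R y) \<le> cost A B (superpose_ctrl A B \<Psi>1 \<Psi>2 x y a b) (a *\<^sub>R x + b *\<^sub>R y)"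
    unfolding Vext_eq_INF_cost by (rule INF_lower) simp
  also have "\<dots> \<le> ennreal \<bar>a\<bar> * cost A B \<Psi>1 x + ennreal \<bar>b\<bar> * cost A B \<Psi>2 y"
    unfolding cost_def phi_superpose_ctrl
  proof (rule SUP_least)
    fix \<sigma>
    have "(\<Sum>k. ennreal (norm (a *\<^sub>R phi A B k \<sigma> x \<Psi>1 + b *\<^sub>R phi A B k \<sigma> y \<Psi>2)))
      \<le> ennreal \<bar>a\<bar> * (\<Sum>k. ennreal (norm (phi A B k \<sigma> x \<Psi>1)))
        + ennreal \<bar>b\<bar> * (\<Sum>k. ennreal (norm (phi A B k \<sigma> y \<Psi>2)))"
      by (rule suminf_norm_lincomb_le)
    also have "\<dots> \<le> ennreal \<bar>a\<bar> * (SUP \<sigma>. \<Sum>k. ennreal (norm (phi A B k \<sigma> x \<Psi>1)))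
        + ennreal \<bar>b\<bar> * (SUP \<sigma>. \<Sum>k. ennreal (norm (phi A B k \<sigma> y \<Psi>2)))"
      by (intro add_mono mult_left_mono SUP_upper) simp_all
    finally show "(\<Sum>k. ennreal (norm (a *\<^sub>R phi A B k \<sigma> x \<Psi>1 + b *\<^sub>R phi A B k \<sigma> y \<Psi>2)))
      \<le> ennreal \<bar>a\<bar> * (SUP \<sigma>. \<Sum>k. ennreal (norm (phi A B k \<sigma> x \<Psi>1)))
        + ennreal \<bar>b\<bar> * (SUP \<sigma>. \<Sum>k. ennreal (norm (phi A B k \<sigma> y \<Psi>2)))" .
  qed
  finally show ?thesis .
qed

lemma norm_le_cost: "ennreal (norm x) \<le> cost A B \<Psi> x"
proof -
  fix \<sigma>
  have "ennreal (norm x) = (\<Sum>k<1. ennreal (norm (phi A B k \<sigma> x \<Psi>)))"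
    by simp
  also have "\<dots> \<le> (\<Sum>k. ennreal (norm (phi A B k \<sigma> x \<Psi>)))"
    by (intro sum_le_suminf summableI) simp_all
  also have "\<dots> \<le> cost A B \<Psi> x"
    unfolding cost_def by (rule SUP_upper) simp
  finally show ?thesis .
qed

lemma norm_le_Vext: "ennreal (norm x) \<le> Vext A B x"
  unfolding Vext_eq_INF_cost by (rule INF_greatest) (rule norm_le_cost)

lemma cost_le_geometric:
  assumes "0 \<le> \<gamma>" "\<gamma> < 1"
    and bound: "\<And>\<sigma> k. norm (phi A B k \<sigma> x \<Psi>) \<le> C * \<gamma> ^ k * norm x"
  shows "cost A B \<Psi> x \<le> ennreal (C / (1 - \<gamma>) * norm x)"
  unfolding cost_def
proof (rule SUP_least)
  fix \<sigma>
  have nonneg: "0 \<le> C * \<gamma> ^ k * norm x" for k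
    using bound[of k \<sigma>] norm_ge_zero order_trans by blast
  have "(\<lambda>k. \<gamma> ^ k) sums (1 / (1 - \<gamma>))"
    using assms by (intro geometric_sums) simp
  from sums_mult[OF this, of "C * norm x"]
  have sums: "(\<lambda>k. C * \<gamma> ^ k * norm x) sums (C / (1 - \<gamma>) * norm x)"
    by (simp add: algebra_simps)
  have "(\<Sum>k. ennreal (norm (phi A B k \<sigma> x \<Psi>))) \<le> (\<Sum>k. ennreal (C * \<gamma> ^ k * norm x))"
    by (intro suminf_le summableI ennreal_leI bound)
  also have "\<dots> = ennreal (C / (1 - \<gamma>) * norm x)"
    by (rule suminf_ennreal_eq[OF nonneg sums])
  finally show "(\<Sum>k. ennreal (norm (phi A B k \<sigma> x \<Psi>))) \<le> ennreal (C / (1 - \<gamma>) * norm x)" .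
qed

lemma Vext_le_cost: "Vext A B x \<le> cost A B \<Psi> x"
  unfolding Vext_eq_INF_cost by (rule INF_lower) simp

lemma V_lincomb_le:
  assumes finite: "\<And>z. Vext A B z < top"
  shows "V A B (a *\<^sub>R x + b *\<^sub>R y) \<le> \<bar>a\<bar> * V A B x + \<bar>b\<bar> * V A B y"
proof (rule field_le_epsilon)
  fix e :: real
  assume "0 < e"
  define d where "d = e / (\<bar>a\<bar> + \<bar>b\<bar> + 1)"
  have "0 < d" and d_le: "(\<bar>a\<bar> + \<bar>b\<bar>) * d \<le> e"
    unfolding d_def using \<open>0 < e\<close> by (simp_all add: field_simps)
  have Vext_V: "Vext A B z = ennreal (V A B z)" for z
    unfolding V_def using finite by (simp add: ennreal_enn2real)
  have V_nonneg: "0 \<le> V A B z" for z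
    unfolding V_def by (rule enn2real_nonneg)
  have "\<exists>\<Psi>. cost A B \<Psi> z \<le> ennreal (V A B z + d)" for z
  proof -
    have "(INF \<Psi>. cost A B \<Psi> z) < ennreal (V A B z + d)"
      unfolding Vext_eq_INF_cost[symmetric] Vext_V
      using \<open>0 < d\<close> V_nonneg by (simp add: ennreal_lessI)
    then show ?thesis
      unfolding INF_less_iff by (blast intro: less_imp_le)
  qed
  then obtain \<Psi>1 \<Psi>2 where \<Psi>1: "cost A B \<Psi>1 x \<le> ennreal (V A B x + d)"
    and \<Psi>2: "cost A B \<Psi>2 y \<le> ennreal (V A B y + d)"
    by blast
  have "ennreal (V A B (a *\<^sub>R x + b *\<^sub>R y)) \<le> ennreal \<bar>a\<bar> * cost A B \<Psi>1 x + ennreal \<bar>b\<bar> * cost A B \<Psi>2 y"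
    unfolding Vext_V[symmetric] by (rule Vext_lincomb_le_cost)
  also have "\<dots> \<le> ennreal \<bar>a\<bar> * ennreal (V A B x + d) + ennreal \<bar>b\<bar> * ennreal (V A B y + d)"
    by (intro add_mono mult_left_mono \<Psi>1 \<Psi>2) simp_all
  also have "\<dots> = ennreal (\<bar>a\<bar> * (V A B x + d) + \<bar>b\<bar> * (V A B y + d))"
    using \<open>0 < d\<close> V_nonneg by (simp add: ennreal_mult ennreal_plus del: ennreal_plus_if)
  finally have "V A B (a *\<^sub>R x + b *\<^sub>R y) \<le> \<bar>a\<bar> * (V A B x + d) + \<bar>b\<bar> * (V A B y + d)"
    using \<open>0 < d\<close> V_nonneg by (subst (asm) ennreal_le_iff) auto
  then show "V A B (a *\<^sub>R x + b *\<^sub>R y) \<le> \<bar>a\<bar> * V A B x + \<bar>b\<bar> * V A B y + e"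
    using d_le by (simp add: algebra_simps)
qed

lemma abs_homogeneous_if_lincomb_le:
  fixes f :: "'a::real_vector \<Rightarrow> real"
  assumes lincomb: "\<And>a b x y. f (a *\<^sub>R x + b *\<^sub>R y) \<le> \<bar>a\<bar> * f x + \<bar>b\<bar> * f y"
    and nonneg: "\<And>x. 0 \<le> f x"
  shows "f (c *\<^sub>R x) = \<bar>c\<bar> * f x"
proof -
  have scale_le: "f (c *\<^sub>R x) \<le> \<bar>c\<bar> * f x" for c x
    using lincomb[of c x 0 0] by simp
  show ?thesis
  proof (cases "c = 0")
    case True
    then show ?thesis using scale_le[of 0 x] nonneg[of 0] by simp
  next
    case False
    have "f x = f (inverse c *\<^sub>R (c *\<^sub>R x))"
      using False by simp
    also have "\<dots> \<le> \<bar>inverse c\<bar> * f (c *\<^sub>R x)"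
      by (rule scale_le)
    finally have "\<bar>c\<bar> * f x \<le> f (c *\<^sub>R x)"
      using False by (simp add: field_simps abs_inverse)
    then show ?thesis using scale_le[of c x] by linarith
  qed
qed

lemma convex_on_if_lincomb_le:
  fixes f :: "'a::real_vector \<Rightarrow> real"
  assumes "\<And>a b x y. f (a *\<^sub>R x + b *\<^sub>R y) \<le> \<bar>a\<bar> * f x + \<bar>b\<bar> * f y"
  shows "convex_on UNIV f"
proof (rule convex_onI)
  fix x y :: 'a and t :: real
  assume "0 < t" "t < 1"
  then show "f ((1 - t) *\<^sub>R x + t *\<^sub>R y) \<le> (1 - t) * f x + t * f y"
    using assms[of "1 - t" x t y] by simp
qed simp

lemma lipschitz_on_if_subadditive:
  fixes f :: "'a::real_normed_vector \<Rightarrow> real"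
  assumes subadd: "\<And>x y. f (x + y) \<le> f x + f y"
    and bound: "\<And>x. f x \<le> K * norm x" and "0 \<le> K"
  shows "K-lipschitz_on UNIV f"
proof (rule lipschitz_onI)
  fix x y :: 'a
  have "f x \<le> f y + K * dist x y"
    using subadd[of y "x - y"] bound[of "x - y"] by (simp add: dist_norm)
  moreover have "f y \<le> f x + K * dist x y"
    using subadd[of x "y - x"] bound[of "y - x"] by (simp add: dist_norm norm_minus_commute)
  ultimately show "dist (f x) (f y) \<le> K * dist x y"
    unfolding dist_real_def by linarith
qed (rule \<open>0 \<le> K\<close>)

theorem mainTheorem3:
  fixes A :: "'s::finite \<Rightarrow> real^'n::finite^'n"
    and B :: "'s \<Rightarrow> real^'m::finite^'n"
    and \<Psi> :: "('n,'m,'s) controller"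
    and C \<gamma> :: real
  assumes "C > 1" and "0 \<le> \<gamma>" and "\<gamma> < 1"
    and bound: "\<And>x0 \<sigma> k. norm (phi A B k \<sigma> x0 \<Psi>) \<le> C * \<gamma> ^ k * norm x0"
  shows "(\<forall>x0. ennreal (norm x0) \<le> Vext A B x0
                 \<and> Vext A B x0 \<le> ennreal (C / (1 - \<gamma>) * norm x0))
       \<and> (\<forall>x0. norm x0 \<le> V A B x0 \<and> V A B x0 \<le> C / (1 - \<gamma>) * norm x0)
       \<and> (\<forall>x. V A B x \<ge> 0 \<and> (V A B x = 0 \<longleftrightarrow> x = 0))
       \<and> (\<forall>c x. V A B (c *\<^sub>R x) = \<bar>c\<bar> * V A B x)
       \<and> (\<forall>x y. V A B (x + y) \<le> V A B x + V A B y)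
       \<and> convex_on UNIV (V A B)
       \<and> continuous_on UNIV (V A B)"
proof -
  define K where "K = C / (1 - \<gamma>)"
  have "0 \<le> K" unfolding K_def using assms(1,3) by simp
  have upper: "Vext A B x \<le> ennreal (K * norm x)" for x
    using Vext_le_cost cost_le_geometric[OF assms(2,3) bound] unfolding K_def by (rule order_trans)
  then have finite: "Vext A B x < top" for x
    using le_less_trans ennreal_less_top by blast
  then have Vext_V: "Vext A B x = ennreal (V A B x)" for x
    unfolding V_def by (simp add: ennreal_enn2real)
  have nonneg: "0 \<le> V A B x" for x
    unfolding V_def by (rule enn2real_nonneg)
  have lower_V: "norm x \<le> V A B x" and upper_V: "V A B x \<le> K * norm x" for x
    using norm_le_Vext[of x A B] upper[of x] nonneg \<open>0 \<le> K\<close> by (simp_all add: Vext_V)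
  note lincomb = V_lincomb_le[OF finite]
  have subadd: "V A B (x + y) \<le> V A B x + V A B y" for x y
    using lincomb[of 1 x 1 y] by simp
  have "V A B x = 0 \<longleftrightarrow> x = 0" for x
    using lower_V[of x] upper_V[of 0] nonneg[of x] by auto
  moreover have "continuous_on UNIV (V A B)"
    using lipschitz_on_if_subadditive[OF subadd upper_V \<open>0 \<le> K\<close>] by (rule lipschitz_on_continuous_on)
  ultimately show ?thesis
    using norm_le_Vext upper lower_V upper_V nonneg subadd
      abs_homogeneous_if_lincomb_le[OF lincomb nonneg] convex_on_if_lincomb_le[OF lincomb]
    unfolding K_def by blast
qed

end
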